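(* Let $a,b$ be distinct real numbers and $x_0\in\mathbb{R}$. Let $\mu_n:=2-1/2^{n+1}$ for $n\in\mathbb{N}$. Define the sequence $(\lambda_n)_{n\in\mathbb{N}}$ as the concatenation of the finite blocks $B_0,B_1,B_2,\dots$, where $B_m:=(\mu_0,\mu_1,\dots,\mu_{2m},1)$ (of length $2m+2$); i.e. \[ (\lambda_n)_{n\in\mathbb{N}}=(\mu_0,1,\mu_0,\mu_1,\mu_2,1,\mu_0,\mu_1,\mu_2,\mu_3,\mu_4,1,\dots). \] Define $(x_n)_{n\in\mathbb{N}}$ by \[ x_{2n+1}:=(1-\lambda_{2n})x_{2n}+\lambda_{2n}a,\qquad x_{2n+2}:=(1-\lambda_{2n+1})x_{2n+1}+\lambda_{2n+1}b . \] Then $x_{n(n+1)}=b$ for every $n\ge1$, $|x_{n(n+1)-1}|\to+\infty$, and hence $(x_n)_{n\in\mathbb{N}}$ is unbounded with $\liminf_n|x_n|<+\infty=\limsup_n|x_n|$. *)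

theory Defs
  imports Complex_Main "HOL-Library.Extended_Real" "HOL-Library.Liminf_Limsup"
begin

definition mu :: "nat \<Rightarrow> real" where
  "mu n = 2 - 1 / 2 ^ (n + 1)"

definition blk :: "nat \<Rightarrow> real list" where
  "blk m = map mu [0..<2*m+1] @ [1]"

text \<open>lambda is the concatenation of the blocks B_0, B_1, ...; the first n+1 blocks
  have length at least n+1, so indexing the n-th entry there is correct.\<close>
definition lam :: "nat \<Rightarrow> real" where
  "lam n = concat (map blk [0..<n+1]) ! n"

fun xseq :: "real \<Rightarrow> real \<Rightarrow> real \<Rightarrow> nat \<Rightarrow> real" where
  "xseq a b x0 0 = x0"
| "xseq a b x0 (Suc n) =
     (1 - lam n) * xseq a b x0 n + lam n * (if even n then a else b)"

end

theory Submission
  imports Defs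
begin

text \<open>Block m of \<open>\<lambda>\<close> occupies the indices m(m+1), ..., m(m+1) + 2m + 1, and its last
  entry 1 sends x to b, so x = b at the start of every block m \<ge> 1. Inside a block, a step
  towards b with weight mu(2i+1) followed by a step towards a with weight mu(2i+2) maps
  y = (x - b) / (a - b) to c y + mu(2i+2), where c = (1 - mu(2i+1)) (1 - mu(2i+2)).
  Both weights are just below 2, so c is positive and at least 1 - (3/2) 4^(-(i+1)).
  Since (i+1) 4^(-(i+1)) \<le> 1, the bound y \<ge> (i+1)/2 gives c y \<ge> (i+1)/2 - 3/4, and adding
  mu(2i+2) \<ge> 15/8 yields y \<ge> (i+2)/2 after the pair. Hence |x - b| \<ge> |a - b| (m+1)/2 at the
  end of block m.\<close>

lemma length_blk: "length (blk m) = 2 * m + 2"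
  by (simp add: blk_def)

lemma length_concat_blks: "length (concat (map blk [0..<m])) = m * (m + 1)"
  by (induction m) (auto simp: length_blk)

lemma lam_block: "j \<le> 2 * m + 1 \<Longrightarrow> lam (m * (m + 1) + j) = blk m ! j"
proof -
  assume j: "j \<le> 2 * m + 1"
  define N where "N = m * (m + 1) + j"
  have "m < N + 1"
    unfolding N_def by (cases m) auto
  then have "[0..<N + 1] = [0..<m] @ m # [Suc m..<N + 1]"
    using upt_add_eq_append[of 0 m "N + 1 - m"] upt_conv_Cons[of m "N + 1"] by simp
  then show ?thesis
    using j by (simp add: lam_def N_def nth_append length_concat_blks length_blk)
qed

lemma lam_block_mu: "j \<le> 2 * m \<Longrightarrow> lam (m * (m + 1) + j) = mu j"
  using lam_block[of j m] by (simp add: blk_def nth_append)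

lemma lam_block_last: "lam (m * (m + 1) + (2 * m + 1)) = 1"
  using lam_block[of "2 * m + 1" m] by (simp add: blk_def nth_append)

lemma xseq_block_step:
  "xseq a b x0 (m * (m + 1) + j + 1)
     = (1 - lam (m * (m + 1) + j)) * xseq a b x0 (m * (m + 1) + j)
       + lam (m * (m + 1) + j) * (if even j then a else b)"
  by simp

lemma xseq_block_start:
  assumes "m \<ge> 1"
  shows "xseq a b x0 (m * (m + 1)) = b"
proof -
  define k where "k = m - 1"
  have m: "m = k + 1"
    using assms unfolding k_def by simp
  have "m * (m + 1) = k * (k + 1) + (2 * k + 1) + 1"
    unfolding m by (simp add: algebra_simps)
  then show ?thesis
    using xseq_block_step[of a b x0 k "2 * k + 1"] lam_block_last[of k] by (simp del: xseq.simps)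
qed

text \<open>The value of \<open>(x - b) / (a - b)\<close> at index m(m+1) + 2i + 1, the same in every block m \<ge> i.\<close>
fun block_gain :: "nat \<Rightarrow> real" where
  "block_gain 0 = mu 0"
| "block_gain (Suc i) = (1 - mu (2 * i + 1)) * (1 - mu (2 * i + 2)) * block_gain i + mu (2 * i + 2)"

lemma xseq_block_odd:
  assumes "m \<ge> 1" "i \<le> m"
  shows "xseq a b x0 (m * (m + 1) + 2 * i + 1) = b + (a - b) * block_gain i"
  using assms(2)
proof (induction i)
  case 0
  show ?case
    using xseq_block_step[of a b x0 m 0] lam_block_mu[of 0 m] xseq_block_start[OF assms(1), of a b x0]
    by (simp add: algebra_simps del: xseq.simps)
next
  case (Suc i)
  define s where "s = m * (m + 1)"
  note step = xseq_block_step[of a b x0 m, folded s_def] and mu = lam_block_mu[of _ m, folded s_def]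
  have odd: "xseq a b x0 (s + 2 * i + 1) - b = (a - b) * block_gain i"
    using Suc by (simp add: s_def del: xseq.simps)
  have to_b: "xseq a b x0 (s + 2 * i + 2) - b = (1 - mu (2 * i + 1)) * (xseq a b x0 (s + 2 * i + 1) - b)"
    using step[of "2 * i + 1"] mu[of "2 * i + 1"] Suc.prems by (simp add: algebra_simps del: xseq.simps)
  have to_a: "xseq a b x0 (s + 2 * i + 3) - b
      = (1 - mu (2 * i + 2)) * (xseq a b x0 (s + 2 * i + 2) - b) + mu (2 * i + 2) * (a - b)"
    using step[of "2 * i + 2"] mu[of "2 * i + 2"] Suc.prems
    by (simp add: algebra_simps numeral_3_eq_3 del: xseq.simps)
  have "xseq a b x0 (s + 2 * i + 3) - b = (a - b) * block_gain (Suc i)"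
    unfolding to_a to_b odd by (simp add: algebra_simps)
  then show ?case
    by (simp add: s_def algebra_simps numeral_3_eq_3 del: xseq.simps block_gain.simps)
qed

lemma block_gain_lower: "block_gain i \<ge> real (i + 1) / 2"
proof (induction i)
  case 0
  show ?case by (simp add: mu_def)
next
  case (Suc i)
  define p :: real where "p = 1 / 2 ^ (2 * i + 2)"
  have p: "0 \<le> p" "p \<le> 1 / 4"
    unfolding p_def by (auto simp: field_simps)
  have "i + 1 \<le> (2::nat) ^ (2 * i + 2)"
    using less_exp[of "2 * i + 2"] by linarith
  then have "real (i + 1) \<le> 2 ^ (2 * i + 2)"
    by (metis of_nat_le_iff of_nat_numeral of_nat_power)
  then have ip: "real (i + 1) * p \<le> 1"
    unfolding p_def by (simp add: field_simps)
  have mu: "mu (2 * i + 1) = 2 - p" "mu (2 * i + 2) = 2 - p / 2"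
    unfolding mu_def p_def by (simp_all add: field_simps)
  define c where "c = (1 - p) * (1 - p / 2)"
  have c_lower: "1 - 3 * p / 2 \<le> c"
    unfolding c_def by (simp add: algebra_simps)
  have c_nonneg: "0 \<le> c"
    unfolding c_def using p by (intro mult_nonneg_nonneg) simp_all
  have "real (i + 1) / 2 - 3 / 4 * (real (i + 1) * p) = (1 - 3 * p / 2) * (real (i + 1) / 2)"
    by (simp add: algebra_simps)
  also have "\<dots> \<le> c * block_gain i"
    using mult_mono[OF c_lower Suc.IH c_nonneg] by simp
  finally have "real (i + 1) / 2 - 3 / 4 \<le> c * block_gain i"
    using ip by linarith
  moreover have "block_gain (Suc i) = c * block_gain i + (2 - p / 2)"
    unfolding block_gain.simps mu c_def by (simp add: field_simps)
  ultimately have "block_gain (Suc i) \<ge> real (i + 1) / 2 - 3 / 4 + (2 - p / 2)"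
    by linarith
  then show ?case
    using p by (simp add: field_simps del: block_gain.simps)
qed

lemma abs_xseq_block_end_lower:
  assumes "n \<ge> 2"
  shows "\<bar>xseq a b x0 (n * (n + 1) - 1)\<bar> \<ge> \<bar>a - b\<bar> / 2 * real n - \<bar>b\<bar>"
proof -
  define m where "m = n - 1"
  have m: "n = m + 1" "m \<ge> 1"
    using assms unfolding m_def by simp_all
  have "n * (n + 1) - 1 = m * (m + 1) + 2 * m + 1"
    unfolding m by (simp add: algebra_simps)
  then have x: "xseq a b x0 (n * (n + 1) - 1) = b + (a - b) * block_gain m"
    using xseq_block_odd[OF m(2) order_refl] by simp
  have "\<bar>a - b\<bar> / 2 * real n = \<bar>a - b\<bar> * (real n / 2)"
    by simp
  also have "\<dots> \<le> \<bar>a - b\<bar> * block_gain m"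
    using block_gain_lower[of m] m(1) by (intro mult_left_mono) simp_all
  also have "\<dots> = \<bar>xseq a b x0 (n * (n + 1) - 1) - b\<bar>"
    unfolding x using block_gain_lower[of m] by (simp add: abs_mult)
  also have "\<dots> \<le> \<bar>xseq a b x0 (n * (n + 1) - 1)\<bar> + \<bar>b\<bar>"
    by (rule abs_triangle_ineq4)
  finally show ?thesis
    by (simp only: diff_le_eq)
qed

lemma abs_xseq_block_end_at_top:
  assumes "a \<noteq> b"
  shows "filterlim (\<lambda>n. \<bar>xseq a b x0 (n * (n + 1) - 1)\<bar>) at_top sequentially"
proof (rule filterlim_at_top_mono)
  show "filterlim (\<lambda>n. - \<bar>b\<bar> + \<bar>a - b\<bar> / 2 * real n) at_top sequentially"
    using assms by (intro filterlim_tendsto_add_at_top[OF tendsto_const]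
        filterlim_tendsto_pos_mult_at_top[OF tendsto_const _ filterlim_real_sequentially]) simp
  show "\<forall>\<^sub>F n in sequentially. - \<bar>b\<bar> + \<bar>a - b\<bar> / 2 * real n \<le> \<bar>xseq a b x0 (n * (n + 1) - 1)\<bar>"
  proof (rule eventually_sequentiallyI[of 2])
    fix n :: nat
    assume "n \<ge> 2"
    from abs_xseq_block_end_lower[OF this, of a b x0]
    show "- \<bar>b\<bar> + \<bar>a - b\<bar> / 2 * real n \<le> \<bar>xseq a b x0 (n * (n + 1) - 1)\<bar>"
      by linarith
  qed
qed

lemma not_Bseq_if_subseq_norm_at_top:
  assumes "filterlim (\<lambda>n. norm (X (r n))) at_top sequentially"
  shows "\<not> Bseq X"
proof
  assume "Bseq X"
  then obtain K where K: "\<And>n. norm (X (r n)) \<le> K"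
    using Bseq_subseq[of X r] unfolding Bseq_def by blast
  obtain n where "norm (X (r n)) \<ge> K + 1"
    using assms unfolding filterlim_at_top eventually_sequentially by blast
  with K[of n] show False
    by linarith
qed

lemma liminf_le_subseq_const:
  fixes X :: "nat \<Rightarrow> 'a :: complete_linorder" and r :: "nat \<Rightarrow> nat"
  assumes "strict_mono r" "\<And>n. X (r n) = c"
  shows "liminf X \<le> c"
proof -
  have "liminf X \<le> liminf (X \<circ> r)"
    using assms(1) by (rule liminf_subseq_mono)
  also have "X \<circ> r = (\<lambda>_. c)"
    using assms(2) by auto
  finally show ?thesis
    by (simp add: Liminf_const)
qed

lemma limsup_eq_PInfty_if_subseq:
  fixes X :: "nat \<Rightarrow> ereal" and r :: "nat \<Rightarrow> nat"
  assumes "strict_mono r" "(\<lambda>n. X (r n)) \<longlonglongrightarrow> \<infinity>"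
  shows "limsup X = \<infinity>"
proof -
  have "limsup (X \<circ> r) = \<infinity>"
    using assms(2) by (intro lim_imp_Limsup) (simp_all add: comp_def)
  then show ?thesis
    using limsup_subseq_mono[OF assms(1), of X] by simp
qed

theorem mainTheorem7:
  fixes a b x0 :: real
  assumes "a \<noteq> b"
  shows "(\<forall>n\<ge>1. xseq a b x0 (n * (n + 1)) = b)
    \<and> filterlim (\<lambda>n. \<bar>xseq a b x0 (n * (n + 1) - 1)\<bar>) at_top sequentially
    \<and> \<not> Bseq (xseq a b x0)
    \<and> liminf (\<lambda>n. ereal \<bar>xseq a b x0 n\<bar>) < \<infinity>
    \<and> limsup (\<lambda>n. ereal \<bar>xseq a b x0 n\<bar>) = \<infinity>"
proof -
  let ?X = "\<lambda>n. ereal \<bar>xseq a b x0 n\<bar>"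
  have at_top: "filterlim (\<lambda>n. \<bar>xseq a b x0 (n * (n + 1) - 1)\<bar>) at_top sequentially"
    using assms by (rule abs_xseq_block_end_at_top)
  have "strict_mono (\<lambda>n::nat. (n + 1) * (n + 2))"
    by (simp add: strict_mono_Suc_iff)
  then have "liminf ?X \<le> ereal \<bar>b\<bar>"
    by (rule liminf_le_subseq_const) (use xseq_block_start[of "Suc _"] in simp)
  then have "liminf ?X < \<infinity>"
    by (rule order_le_less_trans) simp
  moreover have "strict_mono (\<lambda>n::nat. n * (n + 1) - 1)"
    by (auto simp: strict_mono_Suc_iff algebra_simps)
  then have "limsup ?X = \<infinity>"
    by (rule limsup_eq_PInfty_if_subseq) (use at_top in \<open>simp add: tendsto_PInfty_eq_at_top\<close>)
  moreover have "\<not> Bseq (xseq a b x0)"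
    using at_top by (intro not_Bseq_if_subseq_norm_at_top[where r = "\<lambda>n. n * (n + 1) - 1"]) simp
  ultimately show ?thesis
    using xseq_block_start at_top by simp
qed

end
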